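(* Let $k\in\mathbb{R}$ with $k\neq0$ and $|k|\neq1$, and let $g:\mathbb{R}^d\to\mathbb{R}^d$ be a homeomorphism topologically conjugate to the homothety $x\mapsto kx$. Then $g$ satisfies the topological shadowing property.
   Context: Let $(X,d)$ be a metric space and $f:X\to X$ a homeomorphism; $\mathcal{C}^+=\{\epsilon:X\to\mathbb{R}^+ : \epsilon \text{ continuous}\}$. For $\delta\in\mathcal{C}^+$, a sequence $\{x_n\}_{n\in\mathbb{Z}}\subset X$ is a $\delta$-pseudo-orbit of $f$ if $d(f(x_n),x_{n+1})<\delta(f(x_n))$ for every $n\in\mathbb{Z}$. For $\epsilon\in\mathcal{C}^+$, the sequence $\{x_n\}$ is $\epsilon$-shadowed by an orbit if there is $y\in X$ with $d(f^n(y),x_n)<\epsilon(x_n)$ for every $n\in\mathbb{Z}$. The homeomorphism $f$ satisfies the topological shadowing property if for every $\epsilon\in\mathcal{C}^+$ there exists $\delta\in\mathcal{C}^+$ such that every $\delta$-pseudo-orbit is $\epsilon$-shadowed by an orbit. $\mathbb{R}^d$ carries the Euclidean metric. *)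

theory Defs
  imports "HOL-Analysis.Analysis"
begin

definition pos_cont :: "('a::metric_space \<Rightarrow> real) \<Rightarrow> bool" where
  "pos_cont e \<longleftrightarrow> continuous_on UNIV e \<and> (\<forall>x. 0 < e x)"

definition int_iter :: "('a \<Rightarrow> 'a) \<Rightarrow> int \<Rightarrow> 'a \<Rightarrow> 'a" where
  "int_iter f n = (if 0 \<le> n then f ^^ nat n else inv f ^^ nat (- n))"

definition pseudo_orbit :: "('a::metric_space \<Rightarrow> 'a) \<Rightarrow> ('a \<Rightarrow> real) \<Rightarrow> (int \<Rightarrow> 'a) \<Rightarrow> bool" where
  "pseudo_orbit f \<delta> x \<longleftrightarrow> (\<forall>n. dist (f (x n)) (x (n + 1)) < \<delta> (f (x n)))"

definition shadowed :: "('a::metric_space \<Rightarrow> 'a) \<Rightarrow> ('a \<Rightarrow> real) \<Rightarrow> (int \<Rightarrow> 'a) \<Rightarrow> bool" where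
  "shadowed f \<epsilon> x \<longleftrightarrow> (\<exists>y. \<forall>n. dist (int_iter f n y) (x n) < \<epsilon> (x n))"

definition topological_shadowing :: "('a::metric_space \<Rightarrow> 'a) \<Rightarrow> bool" where
  "topological_shadowing f \<longleftrightarrow>
     (\<forall>\<epsilon>. pos_cont \<epsilon> \<longrightarrow> (\<exists>\<delta>. pos_cont \<delta> \<and>
        (\<forall>x. pseudo_orbit f \<delta> x \<longrightarrow> shadowed f \<epsilon> x)))"

end

theory Submission
  imports Defs
begin

text \<open>Write e(j) = x(j+1) - k x(j) for the jumps of a pseudo-orbit x of the homothety x |-> k x.
  For |k| < 1 the correction S(n) = (SUM i. k^i e(n-1-i)), and for |k| > 1 the correction
  S(n) = - (SUM i. k^(-i-1) e(n+i)), turns x - S into a true orbit. As the jumps are at most 1,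
  |x(n)| exceeds |x(j)| by at most 1/|1 - |k|| whenever e(j) enters S(n); so a continuous delta(q)
  below a multiple of the minimum of epsilon on the ball of radius |q|/|k| + 1/|1 - |k|| makes all
  these jumps small relative to epsilon(x(n)). Shadowing then transfers along the conjugacy, since
  homeomorphisms of proper spaces have positive continuous moduli of continuity.\<close>

lemma pos_cont_bounded_below_on_compact:
  assumes "pos_cont \<epsilon>" and "compact K"
  shows "\<exists>m>0. \<forall>p\<in>K. m \<le> \<epsilon> p"
proof (cases "K = {}")
  case True
  then show ?thesis by (intro exI[of _ 1]) auto
next
  case False
  have "continuous_on K \<epsilon>" and pos: "\<And>p. 0 < \<epsilon> p"
    using assms(1) continuous_on_subset by (auto simp: pos_cont_def)
  then obtain p0 where "p0 \<in> K" "\<forall>p\<in>K. \<epsilon> p0 \<le> \<epsilon> p"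
    using continuous_attains_inf[OF assms(2) False] by blast
  then show ?thesis using pos[of p0] by blast
qed

text \<open>The infimal convolution of \<open>a\<close> with the distance is 1-Lipschitz and lies below \<open>a\<close>;
  the local lower bounds keep it positive.\<close>
lemma pos_cont_minorant:
  fixes a :: "'a::metric_space \<Rightarrow> real"
  assumes pos: "\<And>p. 0 < a p"
    and local_lb: "\<And>p. \<exists>c>0. \<forall>q. dist p q < 1 \<longrightarrow> c \<le> a q"
  shows "\<exists>\<delta>. pos_cont \<delta> \<and> (\<forall>p. \<delta> p \<le> a p)"
proof -
  define G where "G p = Inf (range (\<lambda>q. a q + dist p q))" for p
  have bdd: "bdd_below (range (\<lambda>q. a q + dist p q))" for p
    by (intro bdd_belowI[where m=0]) (auto intro!: add_nonneg_nonneg less_imp_le[OF pos])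
  have G_le: "G p \<le> a q + dist p q" for p q
    unfolding G_def by (rule cInf_lower[OF _ bdd]) auto
  have G_pos: "0 < G p" for p
  proof -
    obtain c where c: "c > 0" "\<forall>q. dist p q < 1 \<longrightarrow> c \<le> a q" using local_lb by blast
    have "min c 1 \<le> a q + dist p q" for q
    proof (cases "dist p q < 1")
      case True
      then have "c \<le> a q" using c by blast
      then show ?thesis using zero_le_dist[of p q] by linarith
    qed (use pos[of q] in linarith)
    then have "min c 1 \<le> G p" unfolding G_def by (intro cInf_greatest) auto
    then show ?thesis using c by linarith
  qed
  have G_lip: "G p \<le> G p' + dist p p'" for p p'
  proof -
    have "G p - dist p p' \<le> a q + dist p' q" for q
      using G_le[of p q] dist_triangle[of p q p'] by linarith
    then have "G p - dist p p' \<le> G p'" unfolding G_def[of p'] by (intro cInf_greatest) auto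
    then show ?thesis by linarith
  qed
  have "1-lipschitz_on UNIV G"
  proof (rule lipschitz_onI)
    fix p p'
    show "dist (G p) (G p') \<le> 1 * dist p p'"
      using G_lip[of p p'] G_lip[of p' p] by (simp add: dist_real_def dist_commute abs_le_iff)
  qed simp
  then have "continuous_on UNIV G" by (rule lipschitz_on_continuous_on)
  then show ?thesis using G_pos G_le[of p p for p] unfolding pos_cont_def by auto
qed

lemma pos_cont_radius:
  fixes P :: "'a::metric_space \<Rightarrow> real \<Rightarrow> bool"
  assumes down: "\<And>p r r'. P p r \<Longrightarrow> 0 < r' \<Longrightarrow> r' \<le> r \<Longrightarrow> P p r'"
    and local_radius: "\<And>p. \<exists>c>0. \<forall>q. dist p q < 1 \<longrightarrow> P q c"
  shows "\<exists>\<rho>. pos_cont \<rho> \<and> (\<forall>p. P p (\<rho> p))"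
proof -
  define R where "R p = {r. 0 < r \<and> r \<le> 1 \<and> P p r}" for p
  \<comment> \<open>The supremum of the admissible radii need not be admissible; half of it is strictly below.\<close>
  have bdd: "bdd_above (R p)" for p unfolding R_def by (rule bdd_aboveI[where M=1]) auto
  have local_lb: "\<exists>c>0. \<forall>q. dist p q < 1 \<longrightarrow> c \<le> Sup (R q) / 2" for p
  proof -
    obtain c where c: "c > 0" "\<forall>q. dist p q < 1 \<longrightarrow> P q c" using local_radius by blast
    have "min c 1 \<le> Sup (R q)" if "dist p q < 1" for q
      using c that down[of q c "min c 1"] by (intro cSup_upper[OF _ bdd]) (auto simp: R_def)
    then show ?thesis using c(1) by (intro exI[of _ "min c 1 / 2"]) auto
  qed
  have pos: "0 < Sup (R p) / 2" for p
  proof -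
    obtain c where "c > 0" "\<forall>q. dist p q < 1 \<longrightarrow> c \<le> Sup (R q) / 2" using local_lb by blast
    then show ?thesis by (metis dist_self order_less_le_trans zero_less_one)
  qed
  obtain \<rho> where \<rho>: "pos_cont \<rho>" "\<forall>p. \<rho> p \<le> Sup (R p) / 2"
    using pos_cont_minorant[OF pos local_lb] by blast
  have "P p (\<rho> p)" for p
  proof -
    have "\<rho> p < Sup (R p)" using \<rho>(2)[rule_format, of p] pos[of p] by linarith
    moreover have "R p \<noteq> {}"
    proof -
      obtain c where "c > 0" "P p c" using local_radius[of p] by force
      then have "min c 1 \<in> R p" using down[of p c "min c 1"] by (simp add: R_def)
      then show ?thesis by blast
    qed
    ultimately obtain r where "r \<in> R p" "\<rho> p < r"
      using less_cSup_iff[OF _ bdd] by blast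
    then show ?thesis using down \<rho>(1) by (auto simp: R_def pos_cont_def)
  qed
  then show ?thesis using \<rho>(1) by blast
qed

lemma pos_cont_continuity_radius:
  fixes \<phi> :: "'a::heine_borel \<Rightarrow> 'b::metric_space"
  assumes cont: "continuous_on UNIV \<phi>" and \<tau>: "pos_cont \<tau>"
  shows "\<exists>\<rho>. pos_cont \<rho> \<and> (\<forall>p q. dist p q < \<rho> p \<longrightarrow> dist (\<phi> p) (\<phi> q) < \<tau> (\<phi> p))"
proof -
  have local_radius: "\<exists>c>0. \<forall>q. dist p0 q < 1 \<longrightarrow> (\<forall>q'. dist q q' < c \<longrightarrow> dist (\<phi> q) (\<phi> q') < \<tau> (\<phi> q))"
    for p0
  proof -
    define K where "K = cball p0 2"
    have K: "compact K" unfolding K_def by simp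
    obtain m where m: "m > 0" "\<forall>y\<in>\<phi> ` K. m \<le> \<tau> y"
      using pos_cont_bounded_below_on_compact[OF \<tau> compact_continuous_image]
        continuous_on_subset[OF cont] K by blast
    have "uniformly_continuous_on K \<phi>"
      using compact_uniformly_continuous continuous_on_subset[OF cont] K by blast
    then obtain d where d: "d > 0" "\<forall>x\<in>K. \<forall>x'\<in>K. dist x' x < d \<longrightarrow> dist (\<phi> x') (\<phi> x) < m"
      using m(1) unfolding uniformly_continuous_on_def by blast
    show ?thesis
    proof (intro exI[of _ "min d 1"] conjI allI impI)
      fix q q' assume q: "dist p0 q < 1" and q': "dist q q' < min d 1"
      have "q \<in> K" "q' \<in> K" using q q' dist_triangle[of p0 q' q] unfolding K_def by auto
      then show "dist (\<phi> q) (\<phi> q') < \<tau> (\<phi> q)"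
        using d(2) m(2) q' by (fastforce simp: dist_commute)
    qed (use d in auto)
  qed
  show ?thesis
    by (rule pos_cont_radius[where P="\<lambda>p r. \<forall>q. dist p q < r \<longrightarrow> dist (\<phi> p) (\<phi> q) < \<tau> (\<phi> p)"])
      (simp, rule local_radius)
qed

lemma pos_cont_dominated:
  fixes \<epsilon> :: "'a::euclidean_space \<Rightarrow> real"
  assumes \<epsilon>: "pos_cont \<epsilon>" and c: "0 < c" and s: "0 \<le> s"
  shows "\<exists>\<delta>::'a \<Rightarrow> real. pos_cont \<delta> \<and> (\<forall>q. \<delta> q \<le> 1 \<and> (\<forall>p. norm p \<le> norm q * s + C \<longrightarrow> \<delta> q \<le> c * \<epsilon> p))"
proof -
  have local_radius: "\<exists>c'>0. \<forall>q. dist q0 q < 1 \<longrightarrow> c' \<le> 1 \<and> (\<forall>p. norm p \<le> norm q * s + C \<longrightarrow> c' \<le> c * \<epsilon> p)"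
    for q0 :: 'a
  proof -
    define K where "K = cball (0::'a) ((norm q0 + 1) * s + C)"
    obtain m where m: "m > 0" "\<forall>p\<in>K. m \<le> \<epsilon> p"
      using pos_cont_bounded_below_on_compact[OF \<epsilon> compact_cball] unfolding K_def by blast
    show ?thesis
    proof (intro exI[of _ "min 1 (c * m)"] conjI allI impI)
      fix q p :: 'a assume "dist q0 q < 1" and p: "norm p \<le> norm q * s + C"
      then have "norm q \<le> norm q0 + 1"
        using norm_triangle_ineq2[of q q0] by (simp add: dist_norm norm_minus_commute)
      then have "norm q * s \<le> (norm q0 + 1) * s" using s by (rule mult_right_mono)
      then have "p \<in> K" using p unfolding K_def by simp
      then have "c * m \<le> c * \<epsilon> p" using m(2) c by simp
      then show "min 1 (c * m) \<le> c * \<epsilon> p" by linarith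
    qed (use m c in auto)
  qed
  have down: "r' \<le> 1 \<and> (\<forall>p. norm p \<le> norm q * s + C \<longrightarrow> r' \<le> c * \<epsilon> p)"
    if "r \<le> 1 \<and> (\<forall>p. norm p \<le> norm q * s + C \<longrightarrow> r \<le> c * \<epsilon> p)" "0 < r'" "r' \<le> r"
    for q :: 'a and r r'
    using that by (meson order_trans)
  show ?thesis
    by (rule pos_cont_radius[OF down local_radius])
qed

lemma int_iter_orbit:
  assumes inj: "inj f" and orbit: "\<And>n. z (n + 1) = f (z n)"
  shows "int_iter f n (z 0) = z n"
proof -
  have fw: "(f ^^ m) (z 0) = z (int m)" for m
    by (induction m) (simp_all add: orbit[symmetric] add.commute)
  have bw: "(inv f ^^ m) (z 0) = z (- int m)" for m
  proof (induction m)
    case (Suc m)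
    have "z (- int m) = f (z (- int (Suc m)))" using orbit[of "- int (Suc m)"] by simp
    then show ?case using Suc inv_f_f[OF inj] by simp
  qed simp
  show ?thesis
    using fw[of "nat n"] bw[of "nat (- n)"] by (simp add: int_iter_def)
qed

lemma affine_recursion_bound:
  fixes a :: "nat \<Rightarrow> real"
  assumes u: "0 \<le> u" "u < 1" and step: "\<And>m. a (Suc m) \<le> u * a m + v"
  shows "a m \<le> max (a 0) (v / (1 - u))"
proof (induction m)
  case (Suc m)
  define M where "M = max (a 0) (v / (1 - u))"
  have "v = (1 - u) * (v / (1 - u))" using u by simp
  also have "\<dots> \<le> (1 - u) * M" using u by (intro mult_left_mono) (auto simp: M_def)
  finally have "v \<le> M - u * M" by (simp add: algebra_simps)
  moreover have "u * a m \<le> u * M" using Suc u(1) by (simp add: M_def mult_left_mono)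
  ultimately have "a (Suc m) \<le> M" using step[of m] by linarith
  then show ?case by (simp add: M_def)
qed simp

lemma geometric_scaleR_bounded:
  fixes w :: "nat \<Rightarrow> 'a::banach"
  assumes r: "\<bar>r\<bar> < 1" and w: "\<And>i. norm (w i) \<le> B"
  shows "summable (\<lambda>i. r ^ i *\<^sub>R w i)" and "norm (\<Sum>i. r ^ i *\<^sub>R w i) \<le> B / (1 - \<bar>r\<bar>)"
proof -
  have geom: "(\<lambda>i. \<bar>r\<bar> ^ i * B) sums (B / (1 - \<bar>r\<bar>))"
    using sums_mult2[OF geometric_sums, of "\<bar>r\<bar>" B] r by simp
  have le: "norm (r ^ i *\<^sub>R w i) \<le> \<bar>r\<bar> ^ i * B" for i
    using w[of i] by (simp add: power_abs mult_left_mono)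
  show "summable (\<lambda>i. r ^ i *\<^sub>R w i)"
    by (rule summable_comparison_test'[OF sums_summable[OF geom]]) (rule le)
  then show "norm (\<Sum>i. r ^ i *\<^sub>R w i) \<le> B / (1 - \<bar>r\<bar>)"
    using norm_suminf_le[OF le sums_summable[OF geom]] sums_unique[OF geom] by simp
qed

lemma contracting_correction:
  fixes e :: "int \<Rightarrow> 'a::banach"
  assumes k: "\<bar>k\<bar> < 1" and e: "\<And>n i. norm (e (n - 1 - int i)) \<le> B n"
  shows "\<exists>S. (\<forall>n. S (n + 1) = k *\<^sub>R S n + e n) \<and> (\<forall>n. norm (S n) \<le> B n / (1 - \<bar>k\<bar>))"
proof -
  define S where "S n = (\<Sum>i. k ^ i *\<^sub>R e (n - 1 - int i))" for n
  have summable: "summable (\<lambda>i. k ^ i *\<^sub>R e (n - 1 - int i))" for n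
    by (rule geometric_scaleR_bounded(1)[OF k e])
  have "S (n + 1) = k *\<^sub>R S n + e n" for n
  proof -
    have "k *\<^sub>R S n = (\<Sum>i. k *\<^sub>R (k ^ i *\<^sub>R e (n - 1 - int i)))"
      unfolding S_def by (rule suminf_scaleR_right[OF summable])
    also have "\<dots> = (\<Sum>i. k ^ Suc i *\<^sub>R e (n + 1 - 1 - int (Suc i)))"
      by (simp add: algebra_simps)
    also have "\<dots> = S (n + 1) - e n"
      unfolding S_def using suminf_split_head[OF summable[of "n + 1"]] by simp
    finally show ?thesis by simp
  qed
  moreover have "norm (S n) \<le> B n / (1 - \<bar>k\<bar>)" for n
    unfolding S_def by (rule geometric_scaleR_bounded(2)[OF k e])
  ultimately show ?thesis by blast
qed

lemma expanding_correction:
  fixes e :: "int \<Rightarrow> 'a::banach"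
  assumes k: "1 < \<bar>k\<bar>" and e: "\<And>n i. norm (e (n + int i)) \<le> B n"
  shows "\<exists>S. (\<forall>n. S (n + 1) = k *\<^sub>R S n + e n) \<and> (\<forall>n. norm (S n) \<le> B n / (\<bar>k\<bar> - 1))"
proof -
  have r: "\<bar>1 / k\<bar> < 1" and k0: "k \<noteq> 0" using k by auto
  define W where "W n = (\<Sum>i. (1 / k) ^ i *\<^sub>R e (n + int i))" for n
  define S where "S n = - (1 / k) *\<^sub>R W n" for n
  have summable: "summable (\<lambda>i. (1 / k) ^ i *\<^sub>R e (n + int i))" for n
    by (rule geometric_scaleR_bounded(1)[OF r e])
  have "S (n + 1) = k *\<^sub>R S n + e n" for n
  proof -
    have "(1 / k) *\<^sub>R W (n + 1) = (\<Sum>i. (1 / k) *\<^sub>R ((1 / k) ^ i *\<^sub>R e (n + 1 + int i)))"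
      unfolding W_def by (rule suminf_scaleR_right[OF summable])
    also have "\<dots> = (\<Sum>i. (1 / k) ^ Suc i *\<^sub>R e (n + int (Suc i)))"
      by (simp add: algebra_simps)
    also have "\<dots> = W n - e n"
      unfolding W_def using suminf_split_head[OF summable[of n]] by simp
    finally show ?thesis using k0 by (simp add: S_def algebra_simps)
  qed
  moreover have "norm (S n) \<le> B n / (\<bar>k\<bar> - 1)" for n
  proof -
    have "norm (W n) \<le> B n / (1 - \<bar>1 / k\<bar>)"
      unfolding W_def by (rule geometric_scaleR_bounded(2)[OF r e])
    also have "\<dots> = \<bar>k\<bar> * (B n / (\<bar>k\<bar> - 1))"
      using k by (simp add: field_simps)
    finally show ?thesis using k by (simp add: S_def field_simps)
  qed
  ultimately show ?thesis by blast
qed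

lemma homothety_drift_contracting:
  fixes x :: "int \<Rightarrow> 'a::real_normed_vector"
  assumes k: "\<bar>k\<bar> < 1" and step: "\<And>j. norm (x (j + 1) - k *\<^sub>R x j) \<le> 1"
  shows "norm (x (j + int m)) \<le> norm (x j) + 1 / (1 - \<bar>k\<bar>)"
proof -
  have "norm (x (j + int (Suc m))) \<le> \<bar>k\<bar> * norm (x (j + int m)) + 1" for m
  proof -
    have "norm (x (j + int m + 1))
        \<le> \<bar>k\<bar> * norm (x (j + int m)) + norm (x (j + int m + 1) - k *\<^sub>R x (j + int m))"
      using norm_triangle_sub[of "x (j + int m + 1)" "k *\<^sub>R x (j + int m)"] by simp
    moreover have "j + int (Suc m) = j + int m + 1" by simp
    ultimately show ?thesis using step[of "j + int m"] by (metis add_left_mono order_trans)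
  qed
  then have "norm (x (j + int m)) \<le> max (norm (x j)) (1 / (1 - \<bar>k\<bar>))"
    using affine_recursion_bound[where a="\<lambda>m. norm (x (j + int m))" and u="\<bar>k\<bar>" and v=1] k
    by simp
  moreover have "max (norm (x j)) (1 / (1 - \<bar>k\<bar>)) \<le> norm (x j) + 1 / (1 - \<bar>k\<bar>)"
    using k by (intro max.boundedI) auto
  ultimately show ?thesis by linarith
qed

lemma homothety_drift_expanding:
  fixes x :: "int \<Rightarrow> 'a::real_normed_vector"
  assumes k: "1 < \<bar>k\<bar>" and step: "\<And>j. norm (x (j + 1) - k *\<^sub>R x j) \<le> 1"
  shows "norm (x j) \<le> norm (x (j + int m)) + 1 / (\<bar>k\<bar> - 1)"
proof -
  define a where "a i = norm (x (j + int m - int i))" for i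
  have "a (Suc i) \<le> (1 / \<bar>k\<bar>) * a i + 1 / \<bar>k\<bar>" for i
  proof -
    define y where "y = j + int m - int (Suc i)"
    have "k *\<^sub>R x y = x (y + 1) - (x (y + 1) - k *\<^sub>R x y)" by simp
    then have "\<bar>k\<bar> * norm (x y) \<le> norm (x (y + 1)) + 1"
      using norm_triangle_ineq4[of "x (y + 1)"] step[of y]
      by (metis norm_scaleR add_mono order_trans order_refl)
    moreover have "y + 1 = j + int m - int i" by (simp add: y_def)
    ultimately show ?thesis using k unfolding a_def y_def by (simp add: field_simps)
  qed
  then have "a m \<le> max (a 0) ((1 / \<bar>k\<bar>) / (1 - 1 / \<bar>k\<bar>))"
    using affine_recursion_bound[where a=a and u="1 / \<bar>k\<bar>" and v="1 / \<bar>k\<bar>"] k by simp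
  moreover have "(1 / \<bar>k\<bar>) / (1 - 1 / \<bar>k\<bar>) = 1 / (\<bar>k\<bar> - 1)" using k by (simp add: field_simps)
  moreover have "max (a 0) (1 / (\<bar>k\<bar> - 1)) \<le> a 0 + 1 / (\<bar>k\<bar> - 1)"
    using k by (intro max.boundedI) (auto simp: a_def)
  moreover have "a m = norm (x j)" and "a 0 = norm (x (j + int m))" by (simp_all add: a_def)
  ultimately show ?thesis by linarith
qed

lemma homothety_near_orbit:
  fixes x :: "int \<Rightarrow> 'a::banach" and \<epsilon> :: "'a \<Rightarrow> real"
  assumes k: "\<bar>k\<bar> \<noteq> 1"
    and err_le_1: "\<And>j. norm (x (j + 1) - k *\<^sub>R x j) \<le> 1"
    and err_small: "\<And>j n. norm (x n) \<le> norm (x j) + 1 / \<bar>1 - \<bar>k\<bar>\<bar>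
      \<Longrightarrow> norm (x (j + 1) - k *\<^sub>R x j) \<le> \<epsilon> (x n)"
  shows "\<exists>z. (\<forall>n. z (n + 1) = k *\<^sub>R z n) \<and> (\<forall>n. norm (z n - x n) \<le> \<epsilon> (x n) / \<bar>1 - \<bar>k\<bar>\<bar>)"
proof -
  define e where "e j = x (j + 1) - k *\<^sub>R x j" for j
  obtain S where S: "\<And>n. S (n + 1) = k *\<^sub>R S n + e n" "\<And>n. norm (S n) \<le> \<epsilon> (x n) / \<bar>1 - \<bar>k\<bar>\<bar>"
  proof (cases "\<bar>k\<bar> < 1")
    case True
    have "norm (e (n - 1 - int i)) \<le> \<epsilon> (x n)" for n i
      unfolding e_def using True homothety_drift_contracting[where x=x, OF True err_le_1, of "n - 1 - int i" "Suc i"]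
      by (intro err_small) simp
    from contracting_correction[where e=e, OF True this] show ?thesis
      using that True by auto
  next
    case False
    then have expanding: "1 < \<bar>k\<bar>" using k by linarith
    have "norm (e (n + int i)) \<le> \<epsilon> (x n)" for n i
      unfolding e_def using expanding homothety_drift_expanding[where x=x, OF expanding err_le_1, of n i]
      by (intro err_small) simp
    from expanding_correction[where e=e, OF expanding this] show ?thesis
      using that expanding by auto
  qed
  show ?thesis
  proof (intro exI conjI allI)
    fix n
    show "x (n + 1) - S (n + 1) = k *\<^sub>R (x n - S n)"
      using S(1)[of n] by (simp add: e_def algebra_simps)
    show "norm ((x n - S n) - x n) \<le> \<epsilon> (x n) / \<bar>1 - \<bar>k\<bar>\<bar>"
      using S(2)[of n] by simp
  qed
qed

lemma homothety_shadowing: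
  fixes k :: real
  assumes k0: "k \<noteq> 0" and k1: "\<bar>k\<bar> \<noteq> 1"
  shows "topological_shadowing (\<lambda>x::'a::euclidean_space. k *\<^sub>R x)"
  unfolding topological_shadowing_def
proof (intro allI impI)
  fix \<epsilon> :: "'a \<Rightarrow> real" assume \<epsilon>: "pos_cont \<epsilon>"
  define c where "c = \<bar>1 - \<bar>k\<bar>\<bar> / 2"
  have c: "0 < c" using k1 by (simp add: c_def)
  obtain \<delta> :: "'a \<Rightarrow> real" where \<delta>: "pos_cont \<delta>" "\<And>q. \<delta> q \<le> 1"
    "\<And>q p. norm p \<le> norm q * (1 / \<bar>k\<bar>) + 1 / \<bar>1 - \<bar>k\<bar>\<bar> \<Longrightarrow> \<delta> q \<le> c * \<epsilon> p"
    using pos_cont_dominated[OF \<epsilon> c, of "1 / \<bar>k\<bar>" "1 / \<bar>1 - \<bar>k\<bar>\<bar>"] by auto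
  show "\<exists>\<delta>. pos_cont \<delta> \<and> (\<forall>x. pseudo_orbit (\<lambda>x. k *\<^sub>R x) \<delta> x \<longrightarrow> shadowed (\<lambda>x. k *\<^sub>R x) \<epsilon> x)"
  proof (intro exI[of _ \<delta>] conjI allI impI)
    fix x assume "pseudo_orbit (\<lambda>x. k *\<^sub>R x) \<delta> x"
    then have err: "norm (x (j + 1) - k *\<^sub>R x j) < \<delta> (k *\<^sub>R x j)" for j
      unfolding pseudo_orbit_def by (simp add: dist_norm norm_minus_commute)
    have err_le_1: "norm (x (j + 1) - k *\<^sub>R x j) \<le> 1" for j
      using err[of j] \<delta>(2)[of "k *\<^sub>R x j"] by linarith
    have err_small: "norm (x (j + 1) - k *\<^sub>R x j) \<le> c * \<epsilon> (x n)"
      if "norm (x n) \<le> norm (x j) + 1 / \<bar>1 - \<bar>k\<bar>\<bar>" for j n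
      using err[of j] \<delta>(3)[of "x n" "k *\<^sub>R x j"] that k0 by simp
    obtain z where z: "\<forall>n. z (n + 1) = k *\<^sub>R z n"
      "\<forall>n. norm (z n - x n) \<le> c * \<epsilon> (x n) / \<bar>1 - \<bar>k\<bar>\<bar>"
      using homothety_near_orbit[where \<epsilon>="\<lambda>p. c * \<epsilon> p" and x=x, OF k1 err_le_1 err_small] by blast
    have inj: "inj (\<lambda>x::'a. k *\<^sub>R x)" using k0 by (auto intro: injI)
    have "int_iter (\<lambda>x. k *\<^sub>R x) n (z 0) = z n" for n
      by (rule int_iter_orbit[OF inj]) (simp add: z(1))
    moreover have "norm (z n - x n) < \<epsilon> (x n)" for n
    proof -
      have "norm (z n - x n) \<le> \<epsilon> (x n) / 2" using z(2) k1 by (simp add: c_def)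
      moreover have "0 < \<epsilon> (x n)" using \<epsilon> by (simp add: pos_cont_def)
      ultimately show ?thesis by linarith
    qed
    ultimately show "shadowed (\<lambda>x. k *\<^sub>R x) \<epsilon> x"
      unfolding shadowed_def dist_norm by (intro exI[of _ "z 0"]) simp
  qed (fact \<delta>(1))
qed

lemma int_iter_conj:
  assumes hh: "\<And>x. h' (h x) = x" "\<And>y. h (h' y) = y"
    and conj: "\<And>x. h (g x) = L (h x)" and L: "bij L"
  shows "int_iter g n (h' z) = h' (int_iter L n z)"
proof -
  have g_h': "g (h' y) = h' (L y)" for y by (metis hh conj)
  have "inj g" using L by (metis bij_def conj hh(1) injD injI)
  then have inv_g_h': "inv g (h' y) = h' (inv L y)" for y
    using g_h'[of "inv L y"] L by (metis bij_inv_eq_iff inv_f_f)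
  have "(g ^^ m) (h' z) = h' ((L ^^ m) z)" for m
    by (induction m) (simp_all add: g_h')
  moreover have "(inv g ^^ m) (h' z) = h' ((inv L ^^ m) z)" for m
    by (induction m) (simp_all add: inv_g_h')
  ultimately show ?thesis by (simp add: int_iter_def)
qed

lemma topological_shadowing_conj:
  fixes g :: "'a::heine_borel \<Rightarrow> 'a" and L :: "'b::heine_borel \<Rightarrow> 'b"
  assumes hom: "homeomorphism UNIV UNIV h h'" and conj: "\<And>x. h (g x) = L (h x)"
    and L: "bij L" and shadow: "topological_shadowing L"
  shows "topological_shadowing g"
  unfolding topological_shadowing_def
proof (intro allI impI)
  have hh: "\<And>x. h' (h x) = x" "\<And>y. h (h' y) = y"
    and cont: "continuous_on UNIV h" "continuous_on UNIV h'"
    using hom by (auto simp: homeomorphism_def)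
  fix \<epsilon> :: "'a \<Rightarrow> real" assume \<epsilon>: "pos_cont \<epsilon>"
  obtain \<epsilon>L where \<epsilon>L: "pos_cont \<epsilon>L" "\<And>p q. dist p q < \<epsilon>L p \<Longrightarrow> dist (h' p) (h' q) < \<epsilon> (h' p)"
    using pos_cont_continuity_radius[OF cont(2) \<epsilon>] by blast
  obtain \<delta>L where \<delta>L: "pos_cont \<delta>L" "\<And>w. pseudo_orbit L \<delta>L w \<Longrightarrow> shadowed L \<epsilon>L w"
    using shadow \<epsilon>L(1) unfolding topological_shadowing_def by blast
  obtain \<delta> where \<delta>: "pos_cont \<delta>" "\<And>p q. dist p q < \<delta> p \<Longrightarrow> dist (h p) (h q) < \<delta>L (h p)"
    using pos_cont_continuity_radius[OF cont(1) \<delta>L(1)] by blast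
  show "\<exists>\<delta>. pos_cont \<delta> \<and> (\<forall>x. pseudo_orbit g \<delta> x \<longrightarrow> shadowed g \<epsilon> x)"
  proof (intro exI[of _ \<delta>] conjI allI impI)
    fix x assume "pseudo_orbit g \<delta> x"
    then have "pseudo_orbit L \<delta>L (\<lambda>n. h (x n))"
      unfolding pseudo_orbit_def conj[symmetric] using \<delta>(2) by blast
    then obtain z where z: "\<And>n. dist (int_iter L n z) (h (x n)) < \<epsilon>L (h (x n))"
      using \<delta>L(2) unfolding shadowed_def by blast
    have "dist (int_iter g n (h' z)) (x n) < \<epsilon> (x n)" for n
      using \<epsilon>L(2)[OF z[of n, unfolded dist_commute[of _ "h (x n)"]]]
      by (simp add: int_iter_conj[where h=h and h'=h' and g=g, OF hh conj L] hh dist_commute)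
    then show "shadowed g \<epsilon> x" unfolding shadowed_def by blast
  qed (fact \<delta>(1))
qed

theorem mainTheorem7:
  fixes k :: real and g :: "real ^ 'd \<Rightarrow> real ^ 'd"
  assumes "k \<noteq> 0" and "\<bar>k\<bar> \<noteq> 1"
    and "\<exists>g'. homeomorphism UNIV UNIV g g'"
    and "\<exists>(h :: real ^ 'd \<Rightarrow> real ^ 'd) h'. homeomorphism UNIV UNIV h h' \<and> (\<forall>x. h (g x) = k *\<^sub>R h x)"
  shows "topological_shadowing g"
proof -
  obtain h h' :: "real ^ 'd \<Rightarrow> real ^ 'd"
    where hom: "homeomorphism UNIV UNIV h h'" and conj: "\<And>x. h (g x) = k *\<^sub>R h x"
    using assms(4) by blast
  have "bij (\<lambda>x::real ^ 'd. k *\<^sub>R x)"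
    using assms(1) by (intro bij_betw_byWitness[where f'="\<lambda>x. (1 / k) *\<^sub>R x"]) auto
  moreover have "topological_shadowing (\<lambda>x::real ^ 'd. k *\<^sub>R x)"
    using assms(1,2) by (rule homothety_shadowing)
  ultimately show ?thesis
    by (rule topological_shadowing_conj[where h=h and g=g and L="\<lambda>x. k *\<^sub>R x", OF hom conj])
qed

end
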